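(* Let $\mathbb{N}_2=(\{0,1,2\},\oplus,0)$ be the monoid with $0\oplus x=x\oplus 0=x$ for all $x$ and $1\oplus1=1\oplus2=2\oplus1=2\oplus2=2$. The hypergraph $P_3$ with vertex set $\{A,B,C,D\}$ and hyperedges $\{A,B\},\{B,C\},\{C,D\}$ does not have the local-to-global consistency property for $\mathbb{N}_2$-relations.
   Context: $\mathbb{N}_2$ is a positive commutative monoid (positive: $p\oplus q=0$ implies $p=q=0$). Attributes have domains; for a finite attribute set $X$, an $X$-tuple assigns each $A\in X$ a value in its domain; $t[Y]$ is restriction. A $\mathbb{K}$-relation over $X$ is a finitely supported function $R$ from $X$-tuples to the monoid's universe; marginals are $R[Y](t)=\sum_{r: R(r)\neq 0,\, r[Y]=t}R(r)$. A hypergraph with hyperedges $X_1,\dots,X_m$ (vertices as attributes) has the local-to-global consistency property for $\mathbb{K}$-relations if every collection $R_1(X_1),\dots,R_m(X_m)$ that is pairwise consistent (for all $i,j$ some $W$ over $X_i\cup X_j$ has $W[X_i]=R_i$, $W[X_j]=R_j$) is globally consistent (some $W$ over $X_1\cup\dots\cup X_m$ has $W[X_i]=R_i$ for all $i$). *)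

theory Defs
  imports Main
begin

datatype n2 = N0 | N1 | N2

instantiation n2 :: comm_monoid_add
begin
definition zero_n2 :: n2 where "zero_n2 = N0"
fun plus_n2 :: "n2 \<Rightarrow> n2 \<Rightarrow> n2" where
  "plus_n2 N0 y = y"
| "plus_n2 x N0 = x"
| "plus_n2 _ _ = N2"
instance
proof
  fix a b c :: n2
  show "a + b + c = a + (b + c)" by (cases a; cases b; cases c) auto
  show "a + b = b + a" by (cases a; cases b) auto
  show "0 + a = a" by (simp add: zero_n2_def)
qed
end

definition is_tuple :: "('a \<Rightarrow> 'v set) \<Rightarrow> 'a set \<Rightarrow> ('a \<rightharpoonup> 'v) \<Rightarrow> bool" where
  "is_tuple Dom X t \<longleftrightarrow> dom t = X \<and> (\<forall>x\<in>X. the (t x) \<in> Dom x)"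

definition is_krel :: "('a \<Rightarrow> 'v set) \<Rightarrow> 'a set \<Rightarrow> (('a \<rightharpoonup> 'v) \<Rightarrow> 'k::zero) \<Rightarrow> bool" where
  "is_krel Dom X R \<longleftrightarrow> finite {t. R t \<noteq> 0} \<and> (\<forall>t. R t \<noteq> 0 \<longrightarrow> is_tuple Dom X t)"

definition marg :: "(('a \<rightharpoonup> 'v) \<Rightarrow> 'k::comm_monoid_add) \<Rightarrow> 'a set \<Rightarrow> ('a \<rightharpoonup> 'v) \<Rightarrow> 'k" where
  "marg R Y = (\<lambda>t. \<Sum>r \<in> {r. R r \<noteq> 0 \<and> r |` Y = t}. R r)"

definition pairwise_consistent ::
  "('a \<Rightarrow> 'v set) \<Rightarrow> 'a set list \<Rightarrow> (nat \<Rightarrow> ('a \<rightharpoonup> 'v) \<Rightarrow> 'k::comm_monoid_add) \<Rightarrow> bool" where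
  "pairwise_consistent Dom Hs Rs \<longleftrightarrow>
     (\<forall>i<length Hs. \<forall>j<length Hs. \<exists>W. is_krel Dom (Hs!i \<union> Hs!j) W \<and>
        marg W (Hs!i) = Rs i \<and> marg W (Hs!j) = Rs j)"

definition globally_consistent ::
  "('a \<Rightarrow> 'v set) \<Rightarrow> 'a set list \<Rightarrow> (nat \<Rightarrow> ('a \<rightharpoonup> 'v) \<Rightarrow> 'k::comm_monoid_add) \<Rightarrow> bool" where
  "globally_consistent Dom Hs Rs \<longleftrightarrow>
     (\<exists>W. is_krel Dom (\<Union>(set Hs)) W \<and> (\<forall>i<length Hs. marg W (Hs!i) = Rs i))"

definition local_to_global ::
  "'k::comm_monoid_add itself \<Rightarrow> ('a \<Rightarrow> 'v set) \<Rightarrow> 'a set list \<Rightarrow> bool" where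
  "local_to_global K Dom Hs \<longleftrightarrow>
     (\<forall>Rs :: nat \<Rightarrow> ('a \<rightharpoonup> 'v) \<Rightarrow> 'k.
        (\<forall>i<length Hs. is_krel Dom (Hs!i) (Rs i)) \<longrightarrow>
        pairwise_consistent Dom Hs Rs \<longrightarrow> globally_consistent Dom Hs Rs)"

datatype att = A | B | C | D

definition P3 :: "att set list" where
  "P3 = [{A, B}, {B, C}, {C, D}]"

end

theory Submission
  imports Defs
begin

text \<open>
In N_2, addition is addition of natural numbers truncated at 2, so a marginal value 1 means
that exactly one tuple of weight 1 lies above it. In a global witness W, every tuple
with C = 0 has B = 0 (by R_BC) and then A = 0 or A = 1 (by R_AB); since R_AB takes the value 1
at both (0,0) and (1,0), the tuples with C = 0 carry total (untruncated) weight at most 2.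
But R_CD requires weight 1 at (C,D) = (0,0) and weight at least 2 at (0,1): 3 <= 2.
\<close>

fun n2_to_nat :: "n2 \<Rightarrow> nat" where
  "n2_to_nat N0 = 0"
| "n2_to_nat N1 = 1"
| "n2_to_nat N2 = 2"

lemma n2_to_nat_eq_0_iff [simp]: "n2_to_nat x = 0 \<longleftrightarrow> x = 0"
  by (cases x) (simp_all add: zero_n2_def)

lemma n2_to_nat_add: "n2_to_nat (x + y) = min 2 (n2_to_nat x + n2_to_nat y)"
  by (cases x; cases y) simp_all

lemma n2_to_nat_sum: "n2_to_nat (sum g F) = min 2 (\<Sum>x\<in>F. n2_to_nat (g x))"
  by (induction F rule: infinite_finite_induct) (simp_all add: n2_to_nat_add)

lemma marg_eq_sum_superset:
  assumes "finite K" and "{r. W r \<noteq> 0} \<subseteq> K"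
  shows "marg W Y t = (\<Sum>r | r \<in> K \<and> r |` Y = t. W r)"
  unfolding marg_def by (rule sum.mono_neutral_left) (use assms in auto)

lemma marg_self:
  assumes "is_krel Dom X R"
  shows "marg R X = R"
proof
  fix t
  have "r |` X = r" if "R r \<noteq> 0" for r
  proof -
    have "dom r = X"
      using assms that by (simp add: is_krel_def is_tuple_def)
    then show ?thesis
      by (auto simp: restrict_map_def fun_eq_iff)
  qed
  then have "{r. R r \<noteq> 0 \<and> r |` X = t} = (if R t = 0 then {} else {t})"
    by auto
  then show "marg R X t = R t"
    by (simp add: marg_def)
qed

lemma pairwise_consistentI:
  assumes krel: "\<And>i. i < length Hs \<Longrightarrow> is_krel Dom (Hs!i) (Rs i)"
    and pairs: "\<And>i j. i < j \<Longrightarrow> j < length Hs \<Longrightarrow>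
      \<exists>W. is_krel Dom (Hs!i \<union> Hs!j) W \<and> marg W (Hs!i) = Rs i \<and> marg W (Hs!j) = Rs j"
  shows "pairwise_consistent Dom Hs Rs"
  unfolding pairwise_consistent_def
proof (intro allI impI)
  fix i j
  assume "i < length Hs" "j < length Hs"
  then consider "i < j" | "i = j" | "j < i"
    by linarith
  then show "\<exists>W. is_krel Dom (Hs!i \<union> Hs!j) W \<and> marg W (Hs!i) = Rs i \<and> marg W (Hs!j) = Rs j"
  proof cases
    case 1
    then show ?thesis
      using pairs \<open>j < length Hs\<close> by blast
  next
    case 2
    then show ?thesis
      using krel[OF \<open>i < length Hs\<close>] marg_self by (metis sup.idem)
  next
    case 3
    then show ?thesis
      using pairs[OF 3 \<open>i < length Hs\<close>] by (auto simp: Un_commute)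
  qed
qed

lemma marg_restrict_nonzero:
  assumes "finite {r. W r \<noteq> 0}" and "W r \<noteq> (0 :: n2)"
  shows "marg W Y (r |` Y) \<noteq> 0"
proof -
  have "0 < n2_to_nat (W r)"
    using assms(2) by (simp add: zero_less_iff_neq_zero)
  also have "\<dots> \<le> (\<Sum>s | W s \<noteq> 0 \<and> s |` Y = r |` Y. n2_to_nat (W s))"
    using assms by (intro member_le_sum) (auto intro: finite_subset)
  finally have "n2_to_nat (marg W Y (r |` Y)) \<noteq> 0"
    by (simp add: marg_def n2_to_nat_sum)
  then show ?thesis
    by simp
qed

definition n2_weight :: "('a \<Rightarrow> n2) \<Rightarrow> ('a \<Rightarrow> bool) \<Rightarrow> nat" where
  "n2_weight W P = (\<Sum>r | W r \<noteq> 0 \<and> P r. n2_to_nat (W r))"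

lemma n2_to_nat_marg: "n2_to_nat (marg W Y t) = min 2 (n2_weight W (\<lambda>r. r |` Y = t))"
  by (simp add: n2_weight_def marg_def n2_to_nat_sum)

lemma n2_weight_mono:
  assumes "finite {r. W r \<noteq> 0}" and "\<And>r. W r \<noteq> 0 \<Longrightarrow> P r \<Longrightarrow> Q r"
  shows "n2_weight W P \<le> n2_weight W Q"
  unfolding n2_weight_def using assms by (intro sum_mono2) (auto intro: finite_subset)

lemma n2_weight_disj:
  assumes "finite {r. W r \<noteq> 0}" and "\<And>r. \<not> (P r \<and> Q r)"
  shows "n2_weight W (\<lambda>r. P r \<or> Q r) = n2_weight W P + n2_weight W Q"
proof -
  have "{r. W r \<noteq> 0 \<and> (P r \<or> Q r)} = {r. W r \<noteq> 0 \<and> P r} \<union> {r. W r \<noteq> 0 \<and> Q r}"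
    by auto
  then show ?thesis
    unfolding n2_weight_def using assms by (simp add: sum.union_disjoint finite_subset disjoint_iff)
qed

definition krel_of_list :: "(('a \<rightharpoonup> 'v) \<times> 'k) list \<Rightarrow> ('a \<rightharpoonup> 'v) \<Rightarrow> 'k::comm_monoid_add" where
  "krel_of_list L r = sum_list (map snd (filter (\<lambda>p. fst p = r) L))"

lemma krel_of_list_nonzero: "krel_of_list L r \<noteq> 0 \<Longrightarrow> r \<in> fst ` set L"
  unfolding krel_of_list_def by (induction L) (auto split: if_splits)

lemma is_krel_krel_of_list:
  assumes "\<forall>p\<in>set L. is_tuple Dom X (fst p)"
  shows "is_krel Dom X (krel_of_list L)"
  unfolding is_krel_def
proof
  show "finite {r. krel_of_list L r \<noteq> 0}"
    by (rule finite_subset[of _ "fst ` set L"]) (auto dest: krel_of_list_nonzero)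
  show "\<forall>r. krel_of_list L r \<noteq> 0 \<longrightarrow> is_tuple Dom X r"
    using assms krel_of_list_nonzero by fastforce
qed

lemma sum_list_filter_eq_sum_keys:
  fixes L :: "('a \<times> 'k::comm_monoid_add) list"
  shows "sum_list (map snd (filter (\<lambda>p. P (fst p)) L))
    = (\<Sum>r | r \<in> fst ` set L \<and> P r. sum_list (map snd (filter (\<lambda>p. fst p = r) L)))"
proof (induction L)
  case (Cons p L)
  let ?g = "\<lambda>L r. sum_list (map snd (filter (\<lambda>q. fst q = r) L))"
  let ?S = "{r. r \<in> fst ` set L \<and> P r}" and ?S' = "{r. r \<in> fst ` set (p # L) \<and> P r}"
  have no_entries: "?g L r = 0" if "r \<notin> fst ` set L" for r
  proof -
    have "filter (\<lambda>q. fst q = r) L = []"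
      using that by (auto simp: filter_empty_conv)
    then show ?thesis
      by simp
  qed
  have "(\<Sum>r\<in>?S'. ?g (p # L) r) = (\<Sum>r\<in>?S'. (if fst p = r then snd p else 0) + ?g L r)"
    by (rule sum.cong) simp_all
  also have "\<dots> = (if P (fst p) then snd p else 0) + (\<Sum>r\<in>?S'. ?g L r)"
    by (simp add: sum.distrib sum.delta)
  also have "(\<Sum>r\<in>?S'. ?g L r) = (\<Sum>r\<in>?S. ?g L r)"
    using no_entries by (intro sum.mono_neutral_right) auto
  finally show ?case
    using Cons.IH by simp
qed simp

lemma marg_krel_of_list:
  "marg (krel_of_list L) Y = krel_of_list (map (\<lambda>(k, v). (k |` Y, v)) L)"
proof
  fix t
  have "marg (krel_of_list L) Y t = (\<Sum>r | r \<in> fst ` set L \<and> r |` Y = t. krel_of_list L r)"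
    by (rule marg_eq_sum_superset) (auto dest: krel_of_list_nonzero)
  also have "\<dots> = sum_list (map snd (filter (\<lambda>p. fst p |` Y = t) L))"
    unfolding krel_of_list_def by (rule sum_list_filter_eq_sum_keys[symmetric])
  also have "\<dots> = krel_of_list (map (\<lambda>(k, v). (k |` Y, v)) L) t"
    by (simp add: krel_of_list_def filter_map comp_def case_prod_beta)
  finally show "marg (krel_of_list L) Y t = krel_of_list (map (\<lambda>(k, v). (k |` Y, v)) L) t" .
qed

lemma att_fun_eq_iff: "(f :: att \<Rightarrow> 'b) = g \<longleftrightarrow> f A = g A \<and> f B = g B \<and> f C = g C \<and> f D = g D"
proof
  assume agree: "f A = g A \<and> f B = g B \<and> f C = g C \<and> f D = g D"
  show "f = g"
  proof
    fix x
    show "f x = g x"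
      using agree by (cases x) simp_all
  qed
qed simp

definition R_AB :: "(att \<rightharpoonup> nat) \<Rightarrow> n2" where
  "R_AB = krel_of_list [([A \<mapsto> 0, B \<mapsto> 0], N1), ([A \<mapsto> 1, B \<mapsto> 0], N1), ([A \<mapsto> 0, B \<mapsto> 1], N2)]"

definition R_BC :: "(att \<rightharpoonup> nat) \<Rightarrow> n2" where
  "R_BC = krel_of_list [([B \<mapsto> 0, C \<mapsto> 0], N2), ([B \<mapsto> 1, C \<mapsto> 1], N2)]"

definition R_CD :: "(att \<rightharpoonup> nat) \<Rightarrow> n2" where
  "R_CD = krel_of_list [([C \<mapsto> 0, D \<mapsto> 0], N1), ([C \<mapsto> 0, D \<mapsto> 1], N2), ([C \<mapsto> 1, D \<mapsto> 0], N2)]"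

definition W_ABC :: "(att \<rightharpoonup> nat) \<Rightarrow> n2" where
  "W_ABC = krel_of_list
    [([A \<mapsto> 0, B \<mapsto> 0, C \<mapsto> 0], N1), ([A \<mapsto> 1, B \<mapsto> 0, C \<mapsto> 0], N1), ([A \<mapsto> 0, B \<mapsto> 1, C \<mapsto> 1], N2)]"

definition W_BCD :: "(att \<rightharpoonup> nat) \<Rightarrow> n2" where
  "W_BCD = krel_of_list
    [([B \<mapsto> 0, C \<mapsto> 0, D \<mapsto> 0], N1), ([B \<mapsto> 0, C \<mapsto> 0, D \<mapsto> 1], N2), ([B \<mapsto> 1, C \<mapsto> 1, D \<mapsto> 0], N2)]"

definition W_ABCD :: "(att \<rightharpoonup> nat) \<Rightarrow> n2" where
  "W_ABCD = krel_of_list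
    [([A \<mapsto> 0, B \<mapsto> 0, C \<mapsto> 0, D \<mapsto> 0], N1), ([A \<mapsto> 1, B \<mapsto> 0, C \<mapsto> 0, D \<mapsto> 1], N1),
     ([A \<mapsto> 0, B \<mapsto> 1, C \<mapsto> 0, D \<mapsto> 1], N1), ([A \<mapsto> 0, B \<mapsto> 1, C \<mapsto> 1, D \<mapsto> 0], N2)]"

lemma marg_W_ABC: "marg W_ABC {A, B} = R_AB" "marg W_ABC {B, C} = R_BC"
  by (simp_all add: W_ABC_def R_AB_def R_BC_def marg_krel_of_list krel_of_list_def fun_eq_iff att_fun_eq_iff)

lemma marg_W_BCD: "marg W_BCD {B, C} = R_BC" "marg W_BCD {C, D} = R_CD"
  by (simp_all add: W_BCD_def R_BC_def R_CD_def marg_krel_of_list krel_of_list_def fun_eq_iff att_fun_eq_iff)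

lemma marg_W_ABCD: "marg W_ABCD {A, B} = R_AB" "marg W_ABCD {C, D} = R_CD"
  by (simp_all add: W_ABCD_def R_AB_def R_CD_def marg_krel_of_list krel_of_list_def fun_eq_iff att_fun_eq_iff)

lemma is_krel_R:
  "is_krel (\<lambda>_. UNIV) {A, B} R_AB" "is_krel (\<lambda>_. UNIV) {B, C} R_BC" "is_krel (\<lambda>_. UNIV) {C, D} R_CD"
  by (simp_all add: R_AB_def R_BC_def R_CD_def is_krel_krel_of_list is_tuple_def insert_commute)

lemma is_krel_W:
  "is_krel (\<lambda>_. UNIV) {A, B, C} W_ABC" "is_krel (\<lambda>_. UNIV) {B, C, D} W_BCD"
  "is_krel (\<lambda>_. UNIV) {A, B, C, D} W_ABCD"
  by (simp_all add: W_ABC_def W_BCD_def W_ABCD_def is_krel_krel_of_list is_tuple_def insert_commute)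

lemma P3_pairwise_consistent: "pairwise_consistent (\<lambda>_. UNIV) P3 ((!) [R_AB, R_BC, R_CD])"
proof (rule pairwise_consistentI)
  show "is_krel (\<lambda>_. UNIV) (P3 ! i) ([R_AB, R_BC, R_CD] ! i)" if "i < length P3" for i
    using that is_krel_R by (auto simp: P3_def less_Suc_eq)
  show "\<exists>W. is_krel (\<lambda>_. UNIV) (P3 ! i \<union> P3 ! j) W
      \<and> marg W (P3 ! i) = [R_AB, R_BC, R_CD] ! i \<and> marg W (P3 ! j) = [R_AB, R_BC, R_CD] ! j"
    if "i < j" "j < length P3" for i j
  proof -
    have "i = 0 \<and> j = 1 \<or> i = 0 \<and> j = 2 \<or> i = 1 \<and> j = 2"
      using that by (simp add: P3_def) arith
    then consider "i = 0" "j = 1" | "i = 0" "j = 2" | "i = 1" "j = 2"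
      by blast
    then show ?thesis
    proof cases
      case 1
      have "P3 ! i \<union> P3 ! j = {A, B, C}"
        using 1 by (auto simp: P3_def)
      then show ?thesis
        using 1 is_krel_W marg_W_ABC by (auto simp: P3_def)
    next
      case 2
      have "P3 ! i \<union> P3 ! j = {A, B, C, D}"
        using 2 by (auto simp: P3_def)
      then show ?thesis
        using 2 is_krel_W marg_W_ABCD by (auto simp: P3_def)
    next
      case 3
      have "P3 ! i \<union> P3 ! j = {B, C, D}"
        using 3 by (auto simp: P3_def)
      then show ?thesis
        using 3 is_krel_W marg_W_BCD by (auto simp: P3_def)
    qed
  qed
qed

lemma R_no_global_witness:
  assumes krel: "is_krel Dom X W"
    and AB: "marg W {A, B} = R_AB" and BC: "marg W {B, C} = R_BC" and CD: "marg W {C, D} = R_CD"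
  shows False
proof -
  have fin: "finite {r. W r \<noteq> 0}"
    using krel by (simp add: is_krel_def)
  let ?AB = "\<lambda>a b r. r |` {A, B} = [A \<mapsto> a, B \<mapsto> b]"
    and ?CD = "\<lambda>c d r. r |` {C, D} = [C \<mapsto> c, D \<mapsto> d]"
  have C0_imp_AB: "?AB 0 0 r \<or> ?AB 1 0 r"
    if "W r \<noteq> 0" "r C = Some 0" for r
  proof -
    have "R_BC (r |` {B, C}) \<noteq> 0" "R_AB (r |` {A, B}) \<noteq> 0"
      using marg_restrict_nonzero[OF fin \<open>W r \<noteq> 0\<close>] AB BC by metis+
    then show ?thesis
      using \<open>r C = Some 0\<close> unfolding R_AB_def R_BC_def
      by (auto dest!: krel_of_list_nonzero simp: att_fun_eq_iff)
  qed
  have R_values: "R_AB [A \<mapsto> 0, B \<mapsto> 0] = N1" "R_AB [A \<mapsto> 1, B \<mapsto> 0] = N1"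
    "R_CD [C \<mapsto> 0, D \<mapsto> 0] = N1" "R_CD [C \<mapsto> 0, D \<mapsto> 1] = N2"
    by (simp_all add: R_AB_def R_CD_def krel_of_list_def att_fun_eq_iff)
  have AB_00: "n2_weight W (?AB 0 0) \<le> 1"
    using n2_to_nat_marg[of W "{A, B}" "[A \<mapsto> 0, B \<mapsto> 0]"] unfolding AB R_values by simp
  have AB_10: "n2_weight W (?AB 1 0) \<le> 1"
    using n2_to_nat_marg[of W "{A, B}" "[A \<mapsto> 1, B \<mapsto> 0]"] unfolding AB R_values by simp
  have CD_00: "1 \<le> n2_weight W (?CD 0 0)"
    using n2_to_nat_marg[of W "{C, D}" "[C \<mapsto> 0, D \<mapsto> 0]"] unfolding CD R_values by simp
  have CD_01: "2 \<le> n2_weight W (?CD 0 1)"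
    using n2_to_nat_marg[of W "{C, D}" "[C \<mapsto> 0, D \<mapsto> 1]"] unfolding CD R_values by simp
  have "n2_weight W (\<lambda>r. r C = Some 0) \<le> n2_weight W (\<lambda>r. ?AB 0 0 r \<or> ?AB 1 0 r)"
    using C0_imp_AB by (rule n2_weight_mono[OF fin])
  also have "\<dots> = n2_weight W (?AB 0 0) + n2_weight W (?AB 1 0)"
    by (rule n2_weight_disj[OF fin]) (simp add: att_fun_eq_iff)
  finally have "n2_weight W (\<lambda>r. r C = Some 0) \<le> 2"
    using AB_00 AB_10 by linarith
  moreover have
    "n2_weight W (?CD 0 0) + n2_weight W (?CD 0 1) = n2_weight W (\<lambda>r. ?CD 0 0 r \<or> ?CD 0 1 r)"
    by (rule n2_weight_disj[OF fin, symmetric]) (simp add: att_fun_eq_iff)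
  moreover have "\<dots> \<le> n2_weight W (\<lambda>r. r C = Some 0)"
    by (rule n2_weight_mono[OF fin]) (auto simp: att_fun_eq_iff)
  ultimately show False
    using CD_00 CD_01 by linarith
qed

theorem proposition10:
  shows "\<not> (\<forall>Dom :: att \<Rightarrow> nat set. local_to_global TYPE(n2) Dom P3)"
proof
  assume "\<forall>Dom :: att \<Rightarrow> nat set. local_to_global TYPE(n2) Dom P3"
  then have "globally_consistent (\<lambda>_. UNIV) P3 ((!) [R_AB, R_BC, R_CD])"
    using P3_pairwise_consistent is_krel_R unfolding local_to_global_def
    by (auto simp: P3_def less_Suc_eq)
  then obtain W where W: "is_krel (\<lambda>_. UNIV) (\<Union>(set P3)) W"
    "\<forall>i<length P3. marg W (P3 ! i) = [R_AB, R_BC, R_CD] ! i"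
    unfolding globally_consistent_def by blast
  have "marg W {A, B} = R_AB" "marg W {B, C} = R_BC" "marg W {C, D} = R_CD"
    using W(2)[rule_format, of 0] W(2)[rule_format, of 1] W(2)[rule_format, of 2]
    by (simp_all add: P3_def)
  with W(1) show False
    by (rule R_no_global_witness)
qed

end
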